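(* Let $(\mathbb{X},\dagger)$ be a Moore-Penrose dagger additive category and let $\begin{bmatrix}\alpha&\beta\\ \beta^\dagger&\delta\end{bmatrix}:B\oplus C\to B\oplus C$ be a $\dagger$-positive map. Then for any map $\begin{bmatrix}\phi&\psi\end{bmatrix}:B\oplus C\to D$ such that $\begin{bmatrix}\alpha&\beta\\ \beta^\dagger&\delta\end{bmatrix}=\begin{bmatrix}\phi&\psi\end{bmatrix}^\dagger\circ\begin{bmatrix}\phi&\psi\end{bmatrix}$, we have $\beta^\dagger\circ\alpha^\circ=\psi^\dagger\circ(\phi^\circ)^\dagger$.
   Context: A dagger additive category is a dagger category (contravariant identity-on-objects involutive functor $\dagger$) whose hom-sets are abelian groups with bilinear composition and additive $\dagger$, having a zero object and finite biproducts whose projections $\pi_j$ and injections $\iota_j$ satisfy $\pi_j^\dagger=\iota_j$. Maps between biproducts are written as matrices; composition is matrix multiplication and $\dagger$ is transpose with entrywise $\dagger$. An endomorphism $p$ is $\dagger$-positive if $p=\chi^\dagger\circ\chi$ for some map $\chi$. A Moore-Penrose inverse of $f:A\to B$ is a map $f^\circ:B\to A$ with $f f^\circ f=f$, $f^\circ f f^\circ=f^\circ$, $(f f^\circ)^\dagger=f f^\circ$, $(f^\circ f)^\dagger=f^\circ f$ (unique when it exists); a Moore-Penrose dagger additive category is one in which every map has a Moore-Penrose inverse. Here $\alpha:B\to B$, $\beta:C\to B$, $\delta:C\to C$, $\phi:B\to D$, $\psi:C\to D$. *)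

theory Defs
  imports Main
begin

text \<open>Hom A B is the hom-set from A to B; Cmp g f is the
composite g after f; Add, Neg, Zer give the abelian group structure on
each hom-set.\<close>

record ('o, 'm) dcat =
  Hom :: "'o \<Rightarrow> 'o \<Rightarrow> 'm set"
  Cmp :: "'m \<Rightarrow> 'm \<Rightarrow> 'm"
  Idn :: "'o \<Rightarrow> 'm"
  Dag :: "'m \<Rightarrow> 'm"
  Add :: "'m \<Rightarrow> 'm \<Rightarrow> 'm"
  Neg :: "'m \<Rightarrow> 'm"
  Zer :: "'o \<Rightarrow> 'o \<Rightarrow> 'm"

definition is_dagger_biproduct ::
  "('o, 'm) dcat \<Rightarrow> 'o \<Rightarrow> 'o \<Rightarrow> 'o \<Rightarrow> 'm \<Rightarrow> 'm \<Rightarrow> 'm \<Rightarrow> 'm \<Rightarrow> bool" where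
  "is_dagger_biproduct X B C S p1 p2 i1 i2 \<longleftrightarrow>
     p1 \<in> Hom X S B \<and> p2 \<in> Hom X S C \<and> i1 \<in> Hom X B S \<and> i2 \<in> Hom X C S \<and>
     Cmp X p1 i1 = Idn X B \<and> Cmp X p2 i2 = Idn X C \<and>
     Cmp X p1 i2 = Zer X C B \<and> Cmp X p2 i1 = Zer X B C \<and>
     Add X (Cmp X i1 p1) (Cmp X i2 p2) = Idn X S \<and>
     Dag X p1 = i1 \<and> Dag X p2 = i2"

definition dagger_additive_category :: "('o, 'm) dcat \<Rightarrow> bool" where
  "dagger_additive_category X \<longleftrightarrow>
     \<comment> \<open>hom-sets are disjoint\<close>
     (\<forall>A B A' B' f. f \<in> Hom X A B \<longrightarrow> f \<in> Hom X A' B' \<longrightarrow> A = A' \<and> B = B') \<and>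
     \<comment> \<open>category\<close>
     (\<forall>A B C f g. f \<in> Hom X A B \<longrightarrow> g \<in> Hom X B C \<longrightarrow> Cmp X g f \<in> Hom X A C) \<and>
     (\<forall>A B C D f g h. f \<in> Hom X A B \<longrightarrow> g \<in> Hom X B C \<longrightarrow> h \<in> Hom X C D \<longrightarrow>
        Cmp X h (Cmp X g f) = Cmp X (Cmp X h g) f) \<and>
     (\<forall>A. Idn X A \<in> Hom X A A) \<and>
     (\<forall>A B f. f \<in> Hom X A B \<longrightarrow> Cmp X (Idn X B) f = f \<and> Cmp X f (Idn X A) = f) \<and>
     \<comment> \<open>dagger: contravariant, identity on objects, involutive\<close>
     (\<forall>A B f. f \<in> Hom X A B \<longrightarrow> Dag X f \<in> Hom X B A \<and> Dag X (Dag X f) = f) \<and>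
     (\<forall>A B C f g. f \<in> Hom X A B \<longrightarrow> g \<in> Hom X B C \<longrightarrow>
        Dag X (Cmp X g f) = Cmp X (Dag X f) (Dag X g)) \<and>
     (\<forall>A. Dag X (Idn X A) = Idn X A) \<and>
     \<comment> \<open>abelian group structure on hom-sets\<close>
     (\<forall>A B f g. f \<in> Hom X A B \<longrightarrow> g \<in> Hom X A B \<longrightarrow> Add X f g \<in> Hom X A B) \<and>
     (\<forall>A B f. f \<in> Hom X A B \<longrightarrow> Neg X f \<in> Hom X A B) \<and>
     (\<forall>A B. Zer X A B \<in> Hom X A B) \<and>
     (\<forall>A B f g h. f \<in> Hom X A B \<longrightarrow> g \<in> Hom X A B \<longrightarrow> h \<in> Hom X A B \<longrightarrow>
        Add X (Add X f g) h = Add X f (Add X g h)) \<and>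
     (\<forall>A B f g. f \<in> Hom X A B \<longrightarrow> g \<in> Hom X A B \<longrightarrow> Add X f g = Add X g f) \<and>
     (\<forall>A B f. f \<in> Hom X A B \<longrightarrow> Add X f (Zer X A B) = f) \<and>
     (\<forall>A B f. f \<in> Hom X A B \<longrightarrow> Add X f (Neg X f) = Zer X A B) \<and>
     \<comment> \<open>bilinear composition, additive dagger\<close>
     (\<forall>A B C f g h. f \<in> Hom X A B \<longrightarrow> g \<in> Hom X A B \<longrightarrow> h \<in> Hom X B C \<longrightarrow>
        Cmp X h (Add X f g) = Add X (Cmp X h f) (Cmp X h g)) \<and>
     (\<forall>A B C f g h. f \<in> Hom X A B \<longrightarrow> g \<in> Hom X B C \<longrightarrow> h \<in> Hom X B C \<longrightarrow>
        Cmp X (Add X g h) f = Add X (Cmp X g f) (Cmp X h f)) \<and>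
     (\<forall>A B f g. f \<in> Hom X A B \<longrightarrow> g \<in> Hom X A B \<longrightarrow>
        Dag X (Add X f g) = Add X (Dag X f) (Dag X g)) \<and>
     \<comment> \<open>zero object\<close>
     (\<exists>Z. \<forall>A. Hom X A Z = {Zer X A Z} \<and> Hom X Z A = {Zer X Z A}) \<and>
     \<comment> \<open>binary dagger biproducts (with the zero object: all finite ones)\<close>
     (\<forall>B C. \<exists>S p1 p2 i1 i2. is_dagger_biproduct X B C S p1 p2 i1 i2)"

definition dagger_positive :: "('o, 'm) dcat \<Rightarrow> 'o \<Rightarrow> 'm \<Rightarrow> bool" where
  "dagger_positive X A p \<longleftrightarrow> (\<exists>E \<chi>. \<chi> \<in> Hom X A E \<and> p = Cmp X (Dag X \<chi>) \<chi>)"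

definition is_mp_inverse :: "('o, 'm) dcat \<Rightarrow> 'o \<Rightarrow> 'o \<Rightarrow> 'm \<Rightarrow> 'm \<Rightarrow> bool" where
  "is_mp_inverse X A B f g \<longleftrightarrow> g \<in> Hom X B A \<and>
     Cmp X f (Cmp X g f) = f \<and> Cmp X g (Cmp X f g) = g \<and>
     Dag X (Cmp X f g) = Cmp X f g \<and> Dag X (Cmp X g f) = Cmp X g f"

text \<open>The Moore-Penrose inverse of f : A \<rightarrow> B (unique when it exists).\<close>
definition mp_inv :: "('o, 'm) dcat \<Rightarrow> 'o \<Rightarrow> 'o \<Rightarrow> 'm \<Rightarrow> 'm" where
  "mp_inv X A B f = (THE g. is_mp_inverse X A B f g)"

definition mp_dagger_additive_category :: "('o, 'm) dcat \<Rightarrow> bool" where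
  "mp_dagger_additive_category X \<longleftrightarrow> dagger_additive_category X \<and>
     (\<forall>A B f. f \<in> Hom X A B \<longrightarrow> (\<exists>g. is_mp_inverse X A B f g))"

end

theory Submission
  imports Defs
begin

text \<open>Reading off the first row of the Gram map M = R\<dagger> R gives \<alpha> = \<phi>\<dagger> \<phi> and
\<beta> = \<phi>\<dagger> \<psi>.  If g is the Moore-Penrose inverse of \<phi>, then g g\<dagger> is that of \<phi>\<dagger> \<phi>,
and \<phi> g g\<dagger> = (\<phi> g)\<dagger> g\<dagger> = (g \<phi> g)\<dagger> = g\<dagger>.  Hence
\<beta>\<dagger> \<alpha>\<circ> = \<psi>\<dagger> \<phi> g g\<dagger> = \<psi>\<dagger> g\<dagger> = \<psi>\<dagger> (\<phi>\<circ>)\<dagger>.\<close>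

locale dagger_additive =
  fixes X :: "('o, 'm) dcat"
  assumes comp_closed: "f \<in> Hom X A B \<Longrightarrow> g \<in> Hom X B C \<Longrightarrow> Cmp X g f \<in> Hom X A C"
    and comp_assoc: "f \<in> Hom X A B \<Longrightarrow> g \<in> Hom X B C \<Longrightarrow> h \<in> Hom X C D \<Longrightarrow>
      Cmp X h (Cmp X g f) = Cmp X (Cmp X h g) f"
    and comp_id_left: "f \<in> Hom X A B \<Longrightarrow> Cmp X (Idn X B) f = f"
    and comp_id_right: "f \<in> Hom X A B \<Longrightarrow> Cmp X f (Idn X A) = f"
    and dag_closed: "f \<in> Hom X A B \<Longrightarrow> Dag X f \<in> Hom X B A"
    and dag_dag: "f \<in> Hom X A B \<Longrightarrow> Dag X (Dag X f) = f"
    and dag_comp: "f \<in> Hom X A B \<Longrightarrow> g \<in> Hom X B C \<Longrightarrow>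
      Dag X (Cmp X g f) = Cmp X (Dag X f) (Dag X g)"
    and add_closed: "f \<in> Hom X A B \<Longrightarrow> g \<in> Hom X A B \<Longrightarrow> Add X f g \<in> Hom X A B"
    and neg_closed: "f \<in> Hom X A B \<Longrightarrow> Neg X f \<in> Hom X A B"
    and zero_closed: "Zer X A B \<in> Hom X A B"
    and add_assoc: "f \<in> Hom X A B \<Longrightarrow> g \<in> Hom X A B \<Longrightarrow> h \<in> Hom X A B \<Longrightarrow>
      Add X (Add X f g) h = Add X f (Add X g h)"
    and add_commute: "f \<in> Hom X A B \<Longrightarrow> g \<in> Hom X A B \<Longrightarrow> Add X f g = Add X g f"
    and add_zero_right: "f \<in> Hom X A B \<Longrightarrow> Add X f (Zer X A B) = f"
    and add_neg_right: "f \<in> Hom X A B \<Longrightarrow> Add X f (Neg X f) = Zer X A B"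
    and comp_add_right: "f \<in> Hom X A B \<Longrightarrow> g \<in> Hom X A B \<Longrightarrow> h \<in> Hom X B C \<Longrightarrow>
      Cmp X h (Add X f g) = Add X (Cmp X h f) (Cmp X h g)"
    and comp_add_left: "f \<in> Hom X A B \<Longrightarrow> g \<in> Hom X B C \<Longrightarrow> h \<in> Hom X B C \<Longrightarrow>
      Cmp X (Add X g h) f = Add X (Cmp X g f) (Cmp X h f)"

lemma dagger_additive_categoryD: "dagger_additive_category X \<Longrightarrow> dagger_additive X"
  unfolding dagger_additive_category_def dagger_additive_def
  by (elim conjE) (intro conjI allI impI; simp)

context dagger_additive
begin

lemmas hom_closed [intro] = comp_closed dag_closed add_closed zero_closed

lemma add_zero_left: "f \<in> Hom X A B \<Longrightarrow> Add X (Zer X A B) f = f"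
  by (metis add_commute add_zero_right zero_closed)

lemma add_eq_left_imp_zero:
  assumes f: "f \<in> Hom X A B" and g: "g \<in> Hom X A B" and eq: "Add X f g = f"
  shows "g = Zer X A B"
proof -
  have nf: "Neg X f \<in> Hom X A B" using f by (rule neg_closed)
  have neg_f: "Add X (Neg X f) f = Zer X A B"
    using add_commute[OF nf f] add_neg_right[OF f] by simp
  have "g = Add X (Add X (Neg X f) f) g" using neg_f add_zero_left[OF g] by simp
  also have "\<dots> = Add X (Neg X f) (Add X f g)" by (rule add_assoc[OF nf f g])
  also have "\<dots> = Zer X A B" using eq neg_f by simp
  finally show ?thesis .
qed

lemma comp_zero_right:
  assumes h: "h \<in> Hom X B C"
  shows "Cmp X h (Zer X A B) = Zer X A C"
proof -
  have hz: "Cmp X h (Zer X A B) \<in> Hom X A C" using h by blast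
  show ?thesis
    using add_eq_left_imp_zero[OF hz hz] comp_add_right[OF zero_closed zero_closed h]
      add_zero_right[OF zero_closed] by simp
qed

lemma comp_zero_left:
  assumes f: "f \<in> Hom X A B"
  shows "Cmp X (Zer X B C) f = Zer X A C"
proof -
  have zf: "Cmp X (Zer X B C) f \<in> Hom X A C" using f by blast
  show ?thesis
    using add_eq_left_imp_zero[OF zf zf] comp_add_left[OF f zero_closed zero_closed]
      add_zero_right[OF zero_closed] by simp
qed

lemma mp_inverse_comp_right_unique:
  assumes f: "f \<in> Hom X A B" and g: "is_mp_inverse X A B f g" and h: "is_mp_inverse X A B f h"
  shows "Cmp X f g = Cmp X f h"
proof -
  from g have gH: "g \<in> Hom X B A" and fgf: "Cmp X f (Cmp X g f) = f"
    and fg: "Dag X (Cmp X f g) = Cmp X f g" unfolding is_mp_inverse_def by auto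
  from h have hH: "h \<in> Hom X B A" and fhf: "Cmp X f (Cmp X h f) = f"
    and fh: "Dag X (Cmp X f h) = Cmp X f h" unfolding is_mp_inverse_def by auto
  have fhH: "Cmp X f h \<in> Hom X B B" and fgH: "Cmp X f g \<in> Hom X B B"
    using f gH hH by blast+
  have "Cmp X f g = Dag X (Cmp X (Cmp X f (Cmp X h f)) g)" using fg fhf by simp
  also have "\<dots> = Dag X (Cmp X (Cmp X f h) (Cmp X f g))"
    using comp_assoc[OF gH f fhH] comp_assoc[OF f hH f] by simp
  also have "\<dots> = Cmp X (Cmp X f g) (Cmp X f h)"
    using dag_comp[OF fgH fhH] fg fh by simp
  also have "\<dots> = Cmp X (Cmp X f (Cmp X g f)) h"
    using comp_assoc[OF hH f fgH] comp_assoc[OF f gH f] by simp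
  finally show ?thesis using fgf by simp
qed

lemma mp_inverse_comp_left_unique:
  assumes f: "f \<in> Hom X A B" and g: "is_mp_inverse X A B f g" and h: "is_mp_inverse X A B f h"
  shows "Cmp X g f = Cmp X h f"
proof -
  from g have gH: "g \<in> Hom X B A" and fgf: "Cmp X f (Cmp X g f) = f"
    and gf: "Dag X (Cmp X g f) = Cmp X g f" unfolding is_mp_inverse_def by auto
  from h have hH: "h \<in> Hom X B A" and fhf: "Cmp X f (Cmp X h f) = f"
    and hf: "Dag X (Cmp X h f) = Cmp X h f" unfolding is_mp_inverse_def by auto
  have hfH: "Cmp X h f \<in> Hom X A A" and gfH: "Cmp X g f \<in> Hom X A A"
    using f gH hH by blast+
  have "Cmp X g f = Dag X (Cmp X g (Cmp X f (Cmp X h f)))" using gf fhf by simp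
  also have "\<dots> = Dag X (Cmp X (Cmp X g f) (Cmp X h f))"
    using comp_assoc[OF hfH f gH] by simp
  also have "\<dots> = Cmp X (Cmp X h f) (Cmp X g f)"
    using dag_comp[OF hfH gfH] gf hf by simp
  also have "\<dots> = Cmp X h (Cmp X f (Cmp X g f))"
    using comp_assoc[OF gfH f hH] by simp
  finally show ?thesis using fgf by simp
qed

lemma mp_inverse_unique:
  assumes f: "f \<in> Hom X A B" and g: "is_mp_inverse X A B f g" and h: "is_mp_inverse X A B f h"
  shows "g = h"
proof -
  from g have gH: "g \<in> Hom X B A" and gfg: "Cmp X g (Cmp X f g) = g"
    unfolding is_mp_inverse_def by auto
  from h have hH: "h \<in> Hom X B A" and hfh: "Cmp X h (Cmp X f h) = h"
    unfolding is_mp_inverse_def by auto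
  have "g = Cmp X (Cmp X g f) g" using gfg comp_assoc[OF gH f gH] by simp
  also have "\<dots> = Cmp X h (Cmp X f h)"
    using mp_inverse_comp_left_unique[OF assms] mp_inverse_comp_right_unique[OF assms]
      comp_assoc[OF gH f hH] by simp
  finally show ?thesis using hfh by simp
qed

lemma mp_inv_eq: "f \<in> Hom X A B \<Longrightarrow> is_mp_inverse X A B f g \<Longrightarrow> mp_inv X A B f = g"
  unfolding mp_inv_def by (blast intro: mp_inverse_unique)

lemma comp_mp_inverse_gram:
  assumes f: "f \<in> Hom X A B" and g: "is_mp_inverse X A B f g"
  shows "Cmp X f (Cmp X g (Dag X g)) = Dag X g"
proof -
  from g have gH: "g \<in> Hom X B A" and gfg: "Cmp X g (Cmp X f g) = g"
    and fg: "Dag X (Cmp X f g) = Cmp X f g" unfolding is_mp_inverse_def by auto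
  have fgH: "Cmp X f g \<in> Hom X B B" using f gH by blast
  have "Cmp X f (Cmp X g (Dag X g)) = Cmp X (Dag X (Cmp X f g)) (Dag X g)"
    using comp_assoc[OF dag_closed[OF gH] gH f] fg by simp
  also have "\<dots> = Dag X g" using dag_comp[OF fgH gH] gfg by simp
  finally show ?thesis .
qed

lemma mp_inverse_gram:
  assumes f: "f \<in> Hom X A B" and g: "is_mp_inverse X A B f g"
  shows "is_mp_inverse X A A (Cmp X (Dag X f) f) (Cmp X g (Dag X g))"
proof -
  from g have gH: "g \<in> Hom X B A" and fgf: "Cmp X f (Cmp X g f) = f"
    and fg: "Dag X (Cmp X f g) = Cmp X f g" and gf: "Dag X (Cmp X g f) = Cmp X g f"
    unfolding is_mp_inverse_def by auto
  define a where "a = Cmp X (Dag X f) f"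
  define h where "h = Cmp X g (Dag X g)"
  have aH: "a \<in> Hom X A A" and hH: "h \<in> Hom X A A" and gfH: "Cmp X g f \<in> Hom X A A"
    unfolding a_def h_def using f gH by blast+
  have fh: "Cmp X f h = Dag X g"
    unfolding h_def by (rule comp_mp_inverse_gram[OF f g])
  have ah: "Cmp X a h = Cmp X g f"
    unfolding a_def using comp_assoc[OF hH f dag_closed[OF f]] fh dag_comp[OF f gH] gf by simp
  have dag_g_a: "Cmp X (Dag X g) a = f"
    unfolding a_def using comp_assoc[OF f dag_closed[OF f] dag_closed[OF gH]] dag_comp[OF gH f]
      fg comp_assoc[OF f gH f] fgf by simp
  have ha: "Cmp X h a = Cmp X g f"
    unfolding h_def using comp_assoc[OF aH dag_closed[OF gH] gH] dag_g_a by simp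
  show ?thesis
    unfolding is_mp_inverse_def a_def[symmetric] h_def[symmetric]
  proof (intro conjI)
    show "h \<in> Hom X A A" by (rule hH)
    show "Cmp X a (Cmp X h a) = a"
      using ha comp_assoc[OF gfH f dag_closed[OF f]] fgf by (simp add: a_def)
    show "Cmp X h (Cmp X a h) = h"
      using comp_assoc[OF hH aH hH] ha comp_assoc[OF hH f gH] fh by (simp add: h_def)
    show "Dag X (Cmp X a h) = Cmp X a h" using ah gf by simp
    show "Dag X (Cmp X h a) = Cmp X h a" using ha gf by simp
  qed
qed

lemma dagger_biproduct_row_comp_inj:
  assumes bp: "is_dagger_biproduct X B C S p1 p2 i1 i2"
    and f: "f \<in> Hom X B D" and g: "g \<in> Hom X C D"
  shows "Cmp X (Add X (Cmp X f p1) (Cmp X g p2)) i1 = f"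
    and "Cmp X (Add X (Cmp X f p1) (Cmp X g p2)) i2 = g"
proof -
  from bp have p1: "p1 \<in> Hom X S B" and p2: "p2 \<in> Hom X S C" and i1: "i1 \<in> Hom X B S"
    and i2: "i2 \<in> Hom X C S" and e11: "Cmp X p1 i1 = Idn X B" and e22: "Cmp X p2 i2 = Idn X C"
    and e12: "Cmp X p1 i2 = Zer X C B" and e21: "Cmp X p2 i1 = Zer X B C"
    unfolding is_dagger_biproduct_def by auto
  have fp1: "Cmp X f p1 \<in> Hom X S D" and gp2: "Cmp X g p2 \<in> Hom X S D"
    using p1 p2 f g by blast+
  show "Cmp X (Add X (Cmp X f p1) (Cmp X g p2)) i1 = f"
    using comp_add_left[OF i1 fp1 gp2] comp_assoc[OF i1 p1 f, symmetric]
      comp_assoc[OF i1 p2 g, symmetric] e11 e21 f g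
    by (simp add: comp_id_right comp_zero_right add_zero_right)
  show "Cmp X (Add X (Cmp X f p1) (Cmp X g p2)) i2 = g"
    using comp_add_left[OF i2 fp1 gp2] comp_assoc[OF i2 p1 f, symmetric]
      comp_assoc[OF i2 p2 g, symmetric] e12 e22 f g
    by (simp add: comp_id_right comp_zero_right add_zero_left)
qed

lemma dagger_biproduct_proj1_comp_matrix:
  assumes bp: "is_dagger_biproduct X B C S p1 p2 i1 i2"
    and a: "a \<in> Hom X B B" and b: "b \<in> Hom X C B" and c: "c \<in> Hom X B C" and d: "d \<in> Hom X C C"
  shows "Cmp X p1 (Add X (Add X (Cmp X i1 (Cmp X a p1)) (Cmp X i1 (Cmp X b p2)))
                         (Add X (Cmp X i2 (Cmp X c p1)) (Cmp X i2 (Cmp X d p2))))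
         = Add X (Cmp X a p1) (Cmp X b p2)"
proof -
  from bp have p1: "p1 \<in> Hom X S B" and p2: "p2 \<in> Hom X S C" and i1: "i1 \<in> Hom X B S"
    and i2: "i2 \<in> Hom X C S" and e11: "Cmp X p1 i1 = Idn X B" and e12: "Cmp X p1 i2 = Zer X C B"
    unfolding is_dagger_biproduct_def by auto
  have proj1_in1: "Cmp X p1 (Cmp X i1 x) = x" if x: "x \<in> Hom X S B" for x
    using comp_assoc[OF x i1 p1] e11 comp_id_left[OF x] by simp
  have proj1_in2: "Cmp X p1 (Cmp X i2 y) = Zer X S B" if y: "y \<in> Hom X S C" for y
    using comp_assoc[OF y i2 p1] e12 comp_zero_left[OF y] by simp
  have ap1: "Cmp X a p1 \<in> Hom X S B" and bp2: "Cmp X b p2 \<in> Hom X S B"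
    and cp1: "Cmp X c p1 \<in> Hom X S C" and dp2: "Cmp X d p2 \<in> Hom X S C"
    using a b c d p1 p2 by blast+
  have t1: "Cmp X i1 (Cmp X a p1) \<in> Hom X S S" and t2: "Cmp X i1 (Cmp X b p2) \<in> Hom X S S"
    and t3: "Cmp X i2 (Cmp X c p1) \<in> Hom X S S" and t4: "Cmp X i2 (Cmp X d p2) \<in> Hom X S S"
    using ap1 bp2 cp1 dp2 i1 i2 by blast+
  show ?thesis
    using comp_add_right[OF add_closed[OF t1 t2] add_closed[OF t3 t4] p1]
      comp_add_right[OF t1 t2 p1] comp_add_right[OF t3 t4 p1]
      proj1_in1[OF ap1] proj1_in1[OF bp2] proj1_in2[OF cp1] proj1_in2[OF dp2]
      add_zero_right[OF zero_closed] add_zero_right[OF add_closed[OF ap1 bp2]]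
    by simp
qed

lemma dagger_biproduct_gram_first_row:
  assumes bp: "is_dagger_biproduct X B C S p1 p2 i1 i2"
    and a: "a \<in> Hom X B B" and b: "b \<in> Hom X C B" and c: "c \<in> Hom X B C" and d: "d \<in> Hom X C C"
    and f: "f \<in> Hom X B D" and g: "g \<in> Hom X C D"
    and M: "M = Add X (Add X (Cmp X i1 (Cmp X a p1)) (Cmp X i1 (Cmp X b p2)))
                      (Add X (Cmp X i2 (Cmp X c p1)) (Cmp X i2 (Cmp X d p2)))"
    and R: "R = Add X (Cmp X f p1) (Cmp X g p2)"
    and gram: "M = Cmp X (Dag X R) R"
  shows "a = Cmp X (Dag X f) f" and "b = Cmp X (Dag X f) g"
proof -
  from bp have p1: "p1 \<in> Hom X S B" and p2: "p2 \<in> Hom X S C" and i1: "i1 \<in> Hom X B S"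
    and i2: "i2 \<in> Hom X C S" and dag_p1: "Dag X p1 = i1"
    unfolding is_dagger_biproduct_def by auto
  have RH: "R \<in> Hom X S D" unfolding R using f g p1 p2 by blast
  note R_inj = dagger_biproduct_row_comp_inj[OF bp f g, folded R]
  have "Cmp X p1 (Dag X R) = Dag X (Cmp X R i1)"
    using dag_comp[OF i1 RH] dag_p1 dag_dag[OF p1] by simp
  then have "Cmp X p1 M = Cmp X (Dag X f) R"
    using gram comp_assoc[OF RH dag_closed[OF RH] p1] R_inj by simp
  moreover have "Cmp X p1 M = Add X (Cmp X a p1) (Cmp X b p2)"
    unfolding M by (rule dagger_biproduct_proj1_comp_matrix[OF bp a b c d])
  ultimately have row: "Add X (Cmp X a p1) (Cmp X b p2) = Cmp X (Dag X f) R" by simp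
  show "a = Cmp X (Dag X f) f"
    using dagger_biproduct_row_comp_inj(1)[OF bp a b] row
      comp_assoc[OF i1 RH dag_closed[OF f]] R_inj by simp
  show "b = Cmp X (Dag X f) g"
    using dagger_biproduct_row_comp_inj(2)[OF bp a b] row
      comp_assoc[OF i2 RH dag_closed[OF f]] R_inj by simp
qed

end

theorem mainTheorem14:
  fixes X :: "('o, 'm) dcat"
    and B C D S :: 'o
    and p1 p2 i1 i2 \<alpha> \<beta> \<delta> \<phi> \<psi> :: 'm
  assumes "mp_dagger_additive_category X"
    and "is_dagger_biproduct X B C S p1 p2 i1 i2"
    and "\<alpha> \<in> Hom X B B" and "\<beta> \<in> Hom X C B" and "\<delta> \<in> Hom X C C"
    and "\<phi> \<in> Hom X B D" and "\<psi> \<in> Hom X C D"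
    and "M = Add X (Add X (Cmp X i1 (Cmp X \<alpha> p1)) (Cmp X i1 (Cmp X \<beta> p2)))
                   (Add X (Cmp X i2 (Cmp X (Dag X \<beta>) p1)) (Cmp X i2 (Cmp X \<delta> p2)))"
    and "dagger_positive X S M"
    and "R = Add X (Cmp X \<phi> p1) (Cmp X \<psi> p2)"
    and "M = Cmp X (Dag X R) R"
  shows "Cmp X (Dag X \<beta>) (mp_inv X B B \<alpha>) = Cmp X (Dag X \<psi>) (Dag X (mp_inv X B D \<phi>))"
proof -
  interpret dagger_additive X
    using assms(1) dagger_additive_categoryD unfolding mp_dagger_additive_category_def by blast
  note \<phi> = \<open>\<phi> \<in> Hom X B D\<close> and \<psi> = \<open>\<psi> \<in> Hom X C D\<close>
  obtain g where g: "is_mp_inverse X B D \<phi> g"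
    using assms(1) \<phi> unfolding mp_dagger_additive_category_def by blast
  have gH: "g \<in> Hom X D B" using g unfolding is_mp_inverse_def by blast
  have \<alpha>_gram: "\<alpha> = Cmp X (Dag X \<phi>) \<phi>" and \<beta>_gram: "\<beta> = Cmp X (Dag X \<phi>) \<psi>"
    using dagger_biproduct_gram_first_row[OF assms(2-4) dag_closed[OF assms(4)] assms(5-8,10,11)]
    by simp_all
  have "mp_inv X B B \<alpha> = Cmp X g (Dag X g)"
    unfolding \<alpha>_gram by (rule mp_inv_eq[OF _ mp_inverse_gram[OF \<phi> g]]) (use \<phi> in blast)
  moreover have "mp_inv X B D \<phi> = g" using mp_inv_eq[OF \<phi> g] .
  moreover have "Dag X \<beta> = Cmp X (Dag X \<psi>) \<phi>"
    unfolding \<beta>_gram using dag_comp[OF \<psi> dag_closed[OF \<phi>]] dag_dag[OF \<phi>] by simp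
  ultimately show ?thesis
    using comp_assoc[OF comp_closed[OF dag_closed[OF gH] gH] \<phi> dag_closed[OF \<psi>]]
      comp_mp_inverse_gram[OF \<phi> g] by simp
qed

end
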